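(* Let $R$ be a Noetherian integral domain of Krull dimension $1$. Then every radical ideal of $R[X]$ is power stable.
   Context: An ideal $I$ of the polynomial ring $R[X]$ over an integral domain $R$ is called power stable if $I^t\cap R = (I\cap R)^t$ for all integers $t\geq 1$. *)

theory Defs
  imports "HOL-Computational_Algebra.Polynomial" "HOL-Library.Extended_Nat"
begin

definition is_ideal :: "'a::comm_ring_1 set \<Rightarrow> bool" where
  "is_ideal I \<longleftrightarrow> 0 \<in> I \<and> (\<forall>x\<in>I. \<forall>y\<in>I. x + y \<in> I) \<and> (\<forall>r x. x \<in> I \<longrightarrow> r * x \<in> I)"

definition ideal_gen :: "'a::comm_ring_1 set \<Rightarrow> 'a set" where
  "ideal_gen S = \<Inter>{I. is_ideal I \<and> S \<subseteq> I}"

definition ideal_mult :: "'a::comm_ring_1 set \<Rightarrow> 'a set \<Rightarrow> 'a set" where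
  "ideal_mult I J = ideal_gen {x * y | x y. x \<in> I \<and> y \<in> J}"

primrec ideal_pow :: "'a::comm_ring_1 set \<Rightarrow> nat \<Rightarrow> 'a set" where
  "ideal_pow I 0 = UNIV"
| "ideal_pow I (Suc n) = ideal_mult (ideal_pow I n) I"

definition prime_ideal :: "'a::comm_ring_1 set \<Rightarrow> bool" where
  "prime_ideal P \<longleftrightarrow> is_ideal P \<and> 1 \<notin> P \<and> (\<forall>x y. x * y \<in> P \<longrightarrow> x \<in> P \<or> y \<in> P)"

definition radical_ideal :: "'a::comm_ring_1 set \<Rightarrow> bool" where
  "radical_ideal I \<longleftrightarrow> is_ideal I \<and> (\<forall>x n. n \<ge> 1 \<longrightarrow> x ^ n \<in> I \<longrightarrow> x \<in> I)"

definition noetherian :: "'a::comm_ring_1 itself \<Rightarrow> bool" where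
  "noetherian _ \<longleftrightarrow> (\<forall>I :: 'a set. is_ideal I \<longrightarrow> (\<exists>S. finite S \<and> I = ideal_gen S))"

definition prime_chain :: "(nat \<Rightarrow> 'a::comm_ring_1 set) \<Rightarrow> nat \<Rightarrow> bool" where
  "prime_chain P n \<longleftrightarrow> (\<forall>i\<le>n. prime_ideal (P i)) \<and> (\<forall>i<n. P i \<subset> P (Suc i))"

definition krull_dim :: "'a::comm_ring_1 itself \<Rightarrow> enat" where
  "krull_dim _ = Sup {enat n | n. \<exists>P :: nat \<Rightarrow> 'a set. prime_chain P n}"

text \<open>Contraction I \<inter> R of an ideal of R[X] to R (R embedded as constant polynomials).\<close>
definition contract :: "'a::comm_ring_1 poly set \<Rightarrow> 'a set" where
  "contract I = {a. [:a:] \<in> I}"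

definition power_stable :: "'a::comm_ring_1 poly set \<Rightarrow> bool" where
  "power_stable I \<longleftrightarrow> (\<forall>t::nat. t \<ge> 1 \<longrightarrow> contract (ideal_pow I t) = ideal_pow (contract I) t)"

end

theory Submission
  imports Defs
begin

(* Write p = I \<inter> R.  The inclusion p^t \<subseteq> (I^t) \<inter> R is trivial.  For the other one,
   p is radical, so by Noetherianity it is a finite intersection of primes; if p \<noteq> 0
   these primes are nonzero and hence maximal, as dim R = 1.  For each such maximal
   ideal m there is b \<notin> p with b m \<subseteq> p (prime avoidance via comaximality), and from
   this one builds a monic polynomial f of positive degree with I \<subseteq> m[X] + (f).
   Then I^t \<subseteq> m^t[X] + (f), and a constant lying in m^t[X] + (f) lies in m^t.
   Hence (I^t) \<inter> R \<subseteq> \<Inter> m^t, which equals (\<Inter> m)^t = p^t because distinct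
   maximal ideals are comaximal.  The case p = 0 is immediate. *)

lemma ideal_gen_ideal: "is_ideal (ideal_gen S)"
  unfolding ideal_gen_def is_ideal_def by auto

lemma ideal_gen_sub: "S \<subseteq> ideal_gen S"
  unfolding ideal_gen_def by auto

lemma ideal_gen_least: "is_ideal J \<Longrightarrow> S \<subseteq> J \<Longrightarrow> ideal_gen S \<subseteq> J"
  unfolding ideal_gen_def by auto

lemma is_ideal_UNIV: "is_ideal UNIV"
  unfolding is_ideal_def by auto

lemma ideal_0: "is_ideal I \<Longrightarrow> 0 \<in> I"
  unfolding is_ideal_def by auto

lemma ideal_add: "is_ideal I \<Longrightarrow> x \<in> I \<Longrightarrow> y \<in> I \<Longrightarrow> x + y \<in> I"
  unfolding is_ideal_def by auto

lemma ideal_multL: "is_ideal I \<Longrightarrow> x \<in> I \<Longrightarrow> r * x \<in> I"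
  unfolding is_ideal_def by auto

lemma ideal_multR: "is_ideal I \<Longrightarrow> x \<in> I \<Longrightarrow> x * r \<in> I"
  using ideal_multL[of I x r] by (simp add: mult.commute)

lemma ideal_neg: "is_ideal I \<Longrightarrow> x \<in> I \<Longrightarrow> - x \<in> I"
  using ideal_multL[of I x "-1"] by simp

lemma ideal_diff: "is_ideal I \<Longrightarrow> x \<in> I \<Longrightarrow> y \<in> I \<Longrightarrow> x - y \<in> I"
  using ideal_add[of I x "-y"] ideal_neg[of I y] by simp

lemma ideal_sum:
  assumes "is_ideal I" "finite A" "\<And>i. i \<in> A \<Longrightarrow> f i \<in> I"
  shows "sum f A \<in> I"
  using assms(2,3)
  by (induction A rule: finite_induct) (auto intro: ideal_0[OF assms(1)] ideal_add[OF assms(1)])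

lemma ideal_one: "is_ideal I \<Longrightarrow> 1 \<in> I \<Longrightarrow> I = UNIV"
  using ideal_multL[of I 1] by force

lemma ideal_Inter: "(\<And>J. J \<in> F \<Longrightarrow> is_ideal J) \<Longrightarrow> is_ideal (\<Inter>F)"
  unfolding is_ideal_def by auto

definition ideal_plus :: "'a::comm_ring_1 set \<Rightarrow> 'a set \<Rightarrow> 'a set" where
  "ideal_plus I J = {x + y | x y. x \<in> I \<and> y \<in> J}"

definition principal_ideal :: "'a::comm_ring_1 \<Rightarrow> 'a set" where
  "principal_ideal a = range (\<lambda>r. r * a)"

lemma ideal_plusI: "x \<in> I \<Longrightarrow> y \<in> J \<Longrightarrow> x + y \<in> ideal_plus I J"
  unfolding ideal_plus_def by blast

lemma ideal_plusE:
  assumes "z \<in> ideal_plus I J"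
  obtains x y where "z = x + y" "x \<in> I" "y \<in> J"
  using assms unfolding ideal_plus_def by blast

lemma ideal_plus_ideal:
  assumes I: "is_ideal I" and J: "is_ideal J"
  shows "is_ideal (ideal_plus I J)"
  unfolding is_ideal_def
proof (intro conjI ballI allI impI)
  show "0 \<in> ideal_plus I J" using ideal_plusI[OF ideal_0[OF I] ideal_0[OF J]] by simp
next
  fix z w assume z: "z \<in> ideal_plus I J" and w: "w \<in> ideal_plus I J"
  obtain x y where "z = x + y" "x \<in> I" "y \<in> J" using z by (rule ideal_plusE)
  moreover obtain x' y' where "w = x' + y'" "x' \<in> I" "y' \<in> J" using w by (rule ideal_plusE)
  ultimately show "z + w \<in> ideal_plus I J"
    using ideal_plusI[OF ideal_add[OF I] ideal_add[OF J], of x x' y y'] by (simp add: algebra_simps)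
next
  fix r z assume "z \<in> ideal_plus I J"
  then obtain x y where "z = x + y" "x \<in> I" "y \<in> J" by (rule ideal_plusE)
  then show "r * z \<in> ideal_plus I J"
    using ideal_plusI[OF ideal_multL[OF I] ideal_multL[OF J], of x y r r] by (simp add: distrib_left)
qed

lemma ideal_plus_left: "is_ideal J \<Longrightarrow> I \<subseteq> ideal_plus I J"
  using ideal_plusI[of _ I 0 J] ideal_0[of J] by fastforce

lemma ideal_plus_right: "is_ideal I \<Longrightarrow> J \<subseteq> ideal_plus I J"
  using ideal_plusI[of 0 I _ J] ideal_0[of I] by fastforce

lemma is_ideal_principal: "is_ideal (principal_ideal a)"
  unfolding is_ideal_def principal_ideal_def
proof (intro conjI ballI allI impI)
  show "0 \<in> range (\<lambda>r. r * a)" using rangeI[of "\<lambda>r. r * a" 0] by simp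
next
  fix x y assume "x \<in> range (\<lambda>r. r * a)" "y \<in> range (\<lambda>r. r * a)"
  then obtain r s where "x = r * a" "y = s * a" by blast
  then have "x + y = (r + s) * a" by (simp add: distrib_right)
  then show "x + y \<in> range (\<lambda>r. r * a)" by blast
next
  fix s x assume "x \<in> range (\<lambda>r. r * a)"
  then obtain r where "x = r * a" by blast
  then have "s * x = (s * r) * a" by (simp add: mult.assoc)
  then show "s * x \<in> range (\<lambda>r. r * a)" by blast
qed

lemma plus_principalI: "m \<in> M \<Longrightarrow> m + r * a \<in> ideal_plus M (principal_ideal a)"
  unfolding principal_ideal_def by (rule ideal_plusI) auto

lemma plus_principalE:
  assumes "z \<in> ideal_plus M (principal_ideal a)"
  obtains m r where "z = m + r * a" "m \<in> M"
  using assms unfolding principal_ideal_def by (auto elim!: ideal_plusE)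

lemma plus_principal_strict:
  assumes M: "is_ideal M" and x: "x \<notin> M"
  shows "M \<subset> ideal_plus M (principal_ideal x)"
proof -
  have "0 + 1 * x \<in> ideal_plus M (principal_ideal x)" by (rule plus_principalI[OF ideal_0[OF M]])
  then show ?thesis using ideal_plus_left[OF is_ideal_principal, of M x] x by auto
qed

lemma ideal_pow_ideal: "is_ideal (ideal_pow I n)"
  by (cases n) (simp_all only: ideal_pow.simps ideal_mult_def ideal_gen_ideal is_ideal_UNIV)

lemma ideal_pow_gen:
  assumes "x \<in> ideal_pow I n" "y \<in> I"
  shows "x * y \<in> ideal_pow I (Suc n)"
  unfolding ideal_pow.simps ideal_mult_def using assms by (blast intro: subsetD[OF ideal_gen_sub])

lemma ideal_pow_Suc_least:
  assumes J: "is_ideal J" and prod: "\<And>x y. x \<in> ideal_pow I n \<Longrightarrow> y \<in> I \<Longrightarrow> x * y \<in> J"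
  shows "ideal_pow I (Suc n) \<subseteq> J"
  unfolding ideal_pow.simps ideal_mult_def
  by (rule ideal_gen_least[OF J]) (auto intro: prod)

lemma ideal_pow_le:
  assumes I: "is_ideal I" and n: "1 \<le> n"
  shows "ideal_pow I n \<subseteq> I"
proof -
  obtain k where "n = Suc k" using n by (cases n) auto
  then show ?thesis by (simp only:) (rule ideal_pow_Suc_least[OF I ideal_multL[OF I]])
qed

lemma ideal_pow_UNIV: "ideal_pow (UNIV::'a::comm_ring_1 set) n = UNIV"
proof (induction n)
  case (Suc n)
  have "1 * 1 \<in> ideal_pow (UNIV::'a set) (Suc n)" by (rule ideal_pow_gen) (simp_all add: Suc.IH)
  then have "1 \<in> ideal_pow (UNIV::'a set) (Suc n)" by simp
  then show ?case by (rule ideal_one[OF ideal_pow_ideal])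
qed simp

lemma ideal_gen_mult:
  assumes C: "is_ideal C" and ST: "\<And>x y. x \<in> S \<Longrightarrow> y \<in> T \<Longrightarrow> x * y \<in> C"
    and u: "u \<in> ideal_gen S" and v: "v \<in> ideal_gen T"
  shows "u * v \<in> C"
proof -
  have left: "is_ideal {x. \<forall>y\<in>V. x * y \<in> C}" for V
    using C unfolding is_ideal_def by (auto simp: distrib_right mult.assoc)
  have right: "is_ideal {y. \<forall>x\<in>V. x * y \<in> C}" for V
    using C unfolding is_ideal_def by (auto simp: distrib_left mult.left_commute)
  have "ideal_gen T \<subseteq> {y. \<forall>x\<in>S. x * y \<in> C}"
    by (rule ideal_gen_least[OF right]) (use ST in blast)
  then have "ideal_gen S \<subseteq> {x. \<forall>y\<in>ideal_gen T. x * y \<in> C}"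
    by (intro ideal_gen_least[OF left]) blast
  then show ?thesis using u v by blast
qed

lemma ideal_pow_mult_inter:
  assumes A: "is_ideal A" and B: "is_ideal B"
    and "u \<in> ideal_pow A t" and "v \<in> ideal_pow B t"
  shows "u * v \<in> ideal_pow (A \<inter> B) t"
  using assms(3,4)
proof (induction t arbitrary: u v)
  case (Suc t)
  show ?case
  proof (rule ideal_gen_mult[OF ideal_pow_ideal])
    show "u \<in> ideal_gen {x * y |x y. x \<in> ideal_pow A t \<and> y \<in> A}"
      using Suc.prems(1) unfolding ideal_pow.simps ideal_mult_def .
    show "v \<in> ideal_gen {x * y |x y. x \<in> ideal_pow B t \<and> y \<in> B}"
      using Suc.prems(2) unfolding ideal_pow.simps ideal_mult_def .
  next
    fix a b assume "a \<in> {x * y |x y. x \<in> ideal_pow A t \<and> y \<in> A}"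
      and "b \<in> {x * y |x y. x \<in> ideal_pow B t \<and> y \<in> B}"
    then obtain x y x' y' where "a = x * y" "x \<in> ideal_pow A t" "y \<in> A"
      and "b = x' * y'" "x' \<in> ideal_pow B t" "y' \<in> B" by blast
    moreover have "(x * x') * (y * y') \<in> ideal_pow (A \<inter> B) (Suc t)"
      using Suc.IH calculation A B by (intro ideal_pow_gen) (auto intro: ideal_multL ideal_multR)
    ultimately show "a * b \<in> ideal_pow (A \<inter> B) (Suc t)" by (simp add: ac_simps)
  qed
qed simp

definition comaximal :: "'a::comm_ring_1 set \<Rightarrow> 'a set \<Rightarrow> bool" where
  "comaximal A B \<longleftrightarrow> 1 \<in> ideal_plus A B"

lemma comaximalI: "x \<in> A \<Longrightarrow> y \<in> B \<Longrightarrow> x + y = 1 \<Longrightarrow> comaximal A B"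
  unfolding comaximal_def using ideal_plusI[of x A y B] by simp

lemma comaximalE:
  assumes "comaximal A B"
  obtains x y where "x \<in> A" "y \<in> B" "x + y = 1"
  using assms unfolding comaximal_def by (auto elim!: ideal_plusE)

lemma comaximal_sym: "comaximal A B \<Longrightarrow> comaximal B A"
  by (metis comaximalE comaximalI add.commute)

lemma comaximal_inter:
  assumes A: "is_ideal A" and B: "is_ideal B" and C: "is_ideal C"
    and AB: "comaximal A B" and AC: "comaximal A C"
  shows "comaximal A (B \<inter> C)"
proof -
  obtain a b where a: "a \<in> A" and b: "b \<in> B" and ab: "a + b = 1" using AB by (rule comaximalE)
  obtain a' c where a': "a' \<in> A" and c: "c \<in> C" and ac: "a' + c = 1" using AC by (rule comaximalE)
  have "(a * a' + a * c + b * a') + b * c = (a + b) * (a' + c)" by (simp add: algebra_simps)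
  then have "(a * a' + a * c + b * a') + b * c = 1" using ab ac by simp
  moreover have "a * a' + a * c + b * a' \<in> A"
    by (intro ideal_add[OF A] ideal_multR[OF A a] ideal_multL[OF A a'])
  moreover have "b * c \<in> B \<inter> C" using ideal_multR[OF B b] ideal_multL[OF C c] by blast
  ultimately show ?thesis by (intro comaximalI)
qed

lemma comaximal_Inter:
  assumes A: "is_ideal A" and "finite G" and "\<And>B. B \<in> G \<Longrightarrow> is_ideal B \<and> comaximal A B"
  shows "comaximal A (\<Inter>G)"
  using assms(2,3)
proof (induction G rule: finite_induct)
  case empty
  show ?case using comaximalI[OF ideal_0[OF A], of 1] by simp
next
  case (insert B G)
  have "is_ideal (\<Inter>G)" using insert.prems by (intro ideal_Inter) simp
  then show ?case using comaximal_inter[OF A _ _ _ insert.IH] insert.prems by simp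
qed

lemma comaximal_pow:
  assumes A: "is_ideal A" and B: "is_ideal B" and AB: "comaximal A B"
  shows "comaximal A (ideal_pow B s)"
proof (induction s)
  case 0
  show ?case using comaximalI[OF ideal_0[OF A], of 1] by simp
next
  case (Suc s)
  obtain x y where x: "x \<in> A" and y: "y \<in> B" and xy: "x + y = 1" using AB by (rule comaximalE)
  obtain x' y' where x': "x' \<in> A" and y': "y' \<in> ideal_pow B s" and e: "x' + y' = 1"
    using Suc.IH by (rule comaximalE)
  have "(y' * x + x' * y + x' * x) + y' * y = (x' + y') * (x + y)" by (simp add: algebra_simps)
  then have "(y' * x + x' * y + x' * x) + y' * y = 1" using e xy by simp
  moreover have "y' * x + x' * y + x' * x \<in> A"
    by (intro ideal_add[OF A] ideal_multL[OF A x] ideal_multR[OF A x'])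
  moreover have "y' * y \<in> ideal_pow B (Suc s)" using y' y by (rule ideal_pow_gen)
  ultimately show ?case by (intro comaximalI)
qed

lemma comaximal_pow_inter:
  assumes A: "is_ideal A" and B: "is_ideal B" and AB: "comaximal A B"
  shows "ideal_pow A t \<inter> ideal_pow B t \<subseteq> ideal_pow (A \<inter> B) t"
proof
  fix z assume z: "z \<in> ideal_pow A t \<inter> ideal_pow B t"
  have "comaximal B (ideal_pow A t)" using comaximal_pow[OF B A comaximal_sym[OF AB]] .
  then have "comaximal (ideal_pow A t) (ideal_pow B t)"
    using comaximal_pow[OF ideal_pow_ideal B] comaximal_sym by blast
  then obtain e e' where e: "e \<in> ideal_pow A t" and e': "e' \<in> ideal_pow B t" and ee: "e + e' = 1"
    by (rule comaximalE)
  have "z = e * z + z * e'" using ee by (metis mult.commute distrib_left mult_1_right)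
  moreover have "e * z \<in> ideal_pow (A \<inter> B) t" using ideal_pow_mult_inter[OF A B e] z by auto
  moreover have "z * e' \<in> ideal_pow (A \<inter> B) t" using ideal_pow_mult_inter[OF A B _ e'] z by auto
  ultimately show "z \<in> ideal_pow (A \<inter> B) t" using ideal_add[OF ideal_pow_ideal] by metis
qed

lemma Inter_pow_subset_pow_Inter:
  assumes "finite F" and "\<And>A. A \<in> F \<Longrightarrow> is_ideal A"
    and "\<And>A B. A \<in> F \<Longrightarrow> B \<in> F \<Longrightarrow> A \<noteq> B \<Longrightarrow> comaximal A B"
  shows "(\<Inter>A\<in>F. ideal_pow A t) \<subseteq> ideal_pow (\<Inter>F) t"
  using assms
proof (induction F rule: finite_induct)
  case empty
  show ?case by (simp add: ideal_pow_UNIV)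
next
  case (insert A G)
  have A: "is_ideal A" and G: "is_ideal (\<Inter>G)" using insert.prems(1) by (auto intro: ideal_Inter)
  have "comaximal A (\<Inter>G)"
    using insert.hyps(1,2) insert.prems by (intro comaximal_Inter[OF A]) auto
  then have "ideal_pow A t \<inter> ideal_pow (\<Inter>G) t \<subseteq> ideal_pow (A \<inter> \<Inter>G) t"
    by (rule comaximal_pow_inter[OF A G])
  moreover have "(\<Inter>B\<in>G. ideal_pow B t) \<subseteq> ideal_pow (\<Inter>G) t"
    using insert.prems by (intro insert.IH) auto
  ultimately show ?case by auto
qed

text \<open>A maximal ideal: a proper ideal modulo which every element outside it is
  invertible (i.e. the quotient is a field).\<close>

definition maximal_ideal :: "'a::comm_ring_1 set \<Rightarrow> bool" where
  "maximal_ideal m \<longleftrightarrow> is_ideal m \<and> 1 \<notin> m \<and> (\<forall>c. c \<notin> m \<longrightarrow> (\<exists>u. u * c - 1 \<in> m))"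

lemma maximal_ideal_ideal: "maximal_ideal m \<Longrightarrow> is_ideal m"
  unfolding maximal_ideal_def by blast

lemma maximal_ideal_prime:
  assumes m: "maximal_ideal m"
  shows "prime_ideal m"
  unfolding prime_ideal_def
proof (intro conjI allI impI)
  show mi: "is_ideal m" and "1 \<notin> m" using m unfolding maximal_ideal_def by auto
  fix x y assume xy: "x * y \<in> m"
  show "x \<in> m \<or> y \<in> m"
  proof (cases "x \<in> m")
    case False
    then obtain u where u: "u * x - 1 \<in> m" using m unfolding maximal_ideal_def by blast
    have "y = u * (x * y) - (u * x - 1) * y" by (simp add: algebra_simps)
    then show ?thesis using ideal_diff[OF mi ideal_multL[OF mi xy] ideal_multR[OF mi u], of u y] by simp
  qed simp
qed

lemma maximal_ideal_maximal:
  assumes m: "maximal_ideal m" and J: "is_ideal J" "1 \<notin> J" and mJ: "m \<subseteq> J"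
  shows "J = m"
proof (rule ccontr)
  assume "J \<noteq> m"
  then obtain c where c: "c \<in> J" "c \<notin> m" using mJ by blast
  then obtain u where "u * c - 1 \<in> m" using m unfolding maximal_ideal_def by blast
  then have "u * c - (u * c - 1) \<in> J" using mJ ideal_diff[OF J(1) ideal_multL[OF J(1) c(1)]] by blast
  then show False using J(2) by simp
qed

lemma maximal_ideal_comaximal:
  assumes m: "maximal_ideal m" and m': "maximal_ideal m'" and ne: "m \<noteq> m'"
  shows "comaximal m m'"
proof -
  have "\<not> m' \<subseteq> m"
    using maximal_ideal_maximal[OF m'] m ne unfolding maximal_ideal_def by blast
  then obtain x where x: "x \<in> m'" "x \<notin> m" by blast
  then obtain u where u: "u * x - 1 \<in> m" using m unfolding maximal_ideal_def by blast
  have "- (u * x - 1) \<in> m" by (rule ideal_neg[OF maximal_ideal_ideal[OF m] u])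
  moreover have "u * x \<in> m'" by (rule ideal_multL[OF maximal_ideal_ideal[OF m'] x(1)])
  ultimately show ?thesis by (rule comaximalI) simp
qed

lemma separating_element:
  assumes F: "finite F" "\<And>m'. m' \<in> F \<Longrightarrow> maximal_ideal m'" and m: "m \<in> F"
  shows "\<exists>b. b \<notin> m \<and> (\<forall>x\<in>m. b * x \<in> \<Inter>F)"
proof -
  have mm: "maximal_ideal m" by (rule F(2)[OF m])
  have "comaximal m (\<Inter>(F - {m}))"
    using F by (intro comaximal_Inter maximal_ideal_ideal[OF mm])
      (auto intro: maximal_ideal_ideal maximal_ideal_comaximal[OF mm])
  then obtain a b where a: "a \<in> m" and b: "b \<in> \<Inter>(F - {m})" and ab: "a + b = 1"
    by (rule comaximalE)
  have "b \<notin> m"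
  proof
    assume "b \<in> m"
    then have "a + b \<in> m" by (rule ideal_add[OF maximal_ideal_ideal[OF mm] a])
    then show False using ab mm unfolding maximal_ideal_def by simp
  qed
  moreover have "b * x \<in> m'" if "x \<in> m" "m' \<in> F" for x m'
    using that b F(2) ideal_multL ideal_multR maximal_ideal_ideal by (cases "m' = m") blast+
  ultimately show ?thesis by blast
qed

text \<open>Noetherian rings satisfy the ascending chain condition on ideals: the relation
  "is a strictly larger ideal" is well-founded.\<close>

definition ideal_ext_rel :: "('a::comm_ring_1 set \<times> 'a set) set" where
  "ideal_ext_rel = {(J', J). is_ideal J \<and> is_ideal J' \<and> J \<subset> J'}"

lemma chain_Union_ideal:
  assumes fid: "\<And>i. is_ideal (f i)" and mono: "\<And>i j. i \<le> j \<Longrightarrow> f i \<subseteq> f (j::nat)"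
  shows "is_ideal (\<Union>(range f))"
  unfolding is_ideal_def
proof (intro conjI ballI allI impI)
  show "0 \<in> \<Union>(range f)" using ideal_0[OF fid[of 0]] by auto
next
  fix x y assume "x \<in> \<Union>(range f)" "y \<in> \<Union>(range f)"
  then obtain i j where "x \<in> f i" "y \<in> f j" by auto
  then have "x \<in> f (max i j)" "y \<in> f (max i j)" using mono[of i "max i j"] mono[of j "max i j"] by auto
  then show "x + y \<in> \<Union>(range f)" using ideal_add[OF fid] by blast
next
  fix r x assume "x \<in> \<Union>(range f)"
  then show "r * x \<in> \<Union>(range f)" using ideal_multL[OF fid] by blast
qed

lemma finite_subset_chain:
  assumes mono: "\<And>i j. i \<le> j \<Longrightarrow> f i \<subseteq> f j"
  shows "finite S \<Longrightarrow> S \<subseteq> \<Union>(range f) \<Longrightarrow> \<exists>N. S \<subseteq> f (N::nat)"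
proof (induction S rule: finite_induct)
  case (insert x S)
  then obtain N where N: "S \<subseteq> f N" by auto
  obtain i where i: "x \<in> f i" using insert.prems by auto
  have "insert x S \<subseteq> f (max i N)" using N i mono[of i "max i N"] mono[of N "max i N"] by auto
  then show ?case by (rule exI)
qed simp

lemma noetherian_wf:
  assumes N: "noetherian TYPE('a::comm_ring_1)"
  shows "wf (ideal_ext_rel :: ('a set \<times> 'a set) set)"
proof -
  have "\<not> (\<exists>f. \<forall>i. (f (Suc i), f i) \<in> (ideal_ext_rel :: ('a set \<times> 'a set) set))"
  proof
    assume "\<exists>f. \<forall>i. (f (Suc i), f i) \<in> (ideal_ext_rel :: ('a set \<times> 'a set) set)"
    then obtain f :: "nat \<Rightarrow> 'a set" where f: "\<And>i. (f (Suc i), f i) \<in> ideal_ext_rel" by auto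
    have fid: "\<And>i. is_ideal (f i)" and lt: "\<And>i. f i \<subset> f (Suc i)"
      using f unfolding ideal_ext_rel_def by auto
    have fmono: "\<And>i j. i \<le> j \<Longrightarrow> f i \<subseteq> f j"
      by (rule lift_Suc_mono_le[of f]) (use lt in auto)
    let ?U = "\<Union>(range f)"
    obtain S where S: "finite S" "?U = ideal_gen S"
      using N chain_Union_ideal[of f, OF fid fmono] unfolding noetherian_def by auto
    have "S \<subseteq> ?U" using S(2) ideal_gen_sub by auto
    then obtain n where Sn: "S \<subseteq> f n" using finite_subset_chain[of f, OF fmono S(1)] by auto
    have "?U \<subseteq> f n" using S(2) ideal_gen_least[OF fid Sn] by simp
    moreover have "f (Suc n) \<subseteq> ?U" by auto
    ultimately show False using lt[of n] by auto
  qed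
  then show ?thesis by (simp add: wf_iff_no_infinite_down_chain)
qed

text \<open>In a Noetherian ring every proper ideal lies in a maximal ideal: take an
  inclusion-maximal proper ideal above it.\<close>

lemma noetherian_maximal_above:
  assumes N: "noetherian TYPE('a::comm_ring_1)" and K: "is_ideal (K::'a set)" and one: "1 \<notin> K"
  shows "\<exists>M. maximal_ideal M \<and> K \<subseteq> M"
proof -
  let ?Q = "{L. is_ideal L \<and> K \<subseteq> L \<and> 1 \<notin> L}"
  have "K \<in> ?Q" using K one by auto
  then obtain M where M: "M \<in> ?Q" and min: "\<And>L. (L, M) \<in> ideal_ext_rel \<Longrightarrow> L \<notin> ?Q"
    by (rule wfE_min[OF noetherian_wf[OF N]]) (rule that)
  have Mi: "is_ideal M" using M by simp
  have "\<exists>u. u * c - 1 \<in> M" if c: "c \<notin> M" for c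
  proof -
    let ?L = "ideal_plus M (principal_ideal c)"
    have L: "is_ideal ?L" by (rule ideal_plus_ideal[OF Mi is_ideal_principal])
    have "(?L, M) \<in> ideal_ext_rel"
      unfolding ideal_ext_rel_def using plus_principal_strict[OF Mi c] L Mi by auto
    then have "1 \<in> ?L" using min L M plus_principal_strict[OF Mi c] by blast
    then obtain x r where "1 = x + r * c" "x \<in> M" by (rule plus_principalE)
    then have "r * c - 1 = - x" "- x \<in> M" using ideal_neg[OF Mi] by (simp_all add: algebra_simps)
    then show ?thesis by metis
  qed
  then have "maximal_ideal M" using M unfolding maximal_ideal_def by blast
  then show ?thesis using M by blast
qed

definition rad :: "'a::comm_ring_1 set \<Rightarrow> 'a set" where
  "rad J = {z. \<exists>n\<ge>1. z ^ n \<in> J}"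

lemma pow_mem_mono:
  assumes J: "is_ideal J" and z: "z ^ n \<in> J" and nm: "n \<le> m"
  shows "z ^ m \<in> J"
proof -
  have "z ^ m = z ^ (m - n) * z ^ n" using nm by (simp add: power_add[symmetric])
  then show ?thesis using ideal_multL[OF J z] by simp
qed

lemma rad_ideal:
  assumes J: "is_ideal J"
  shows "is_ideal (rad J)"
  unfolding is_ideal_def
proof (intro conjI ballI allI impI)
  show "0 \<in> rad J" unfolding rad_def using ideal_0[OF J] by (intro CollectI exI[of _ 1]) simp
next
  fix x y assume "x \<in> rad J" "y \<in> rad J"
  then obtain a b where a: "a \<ge> 1" "x ^ a \<in> J" and b: "b \<ge> 1" "y ^ b \<in> J"
    unfolding rad_def by blast
  have summand: "of_nat ((a + b) choose k) * x ^ k * y ^ (a + b - k) \<in> J" for k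
  proof (cases "a \<le> k")
    case True
    then have "(of_nat ((a + b) choose k) * y ^ (a + b - k)) * x ^ k \<in> J"
      by (intro ideal_multL[OF J] pow_mem_mono[OF J a(2)])
    then show ?thesis by (simp add: ac_simps)
  next
    case False
    then have "y ^ (a + b - k) \<in> J" using pow_mem_mono[OF J b(2)] by simp
    then show ?thesis by (rule ideal_multL[OF J])
  qed
  have "(x + y) ^ (a + b) = (\<Sum>k\<le>a+b. of_nat ((a + b) choose k) * x ^ k * y ^ (a + b - k))"
    by (rule binomial_ring)
  also have "\<dots> \<in> J" by (rule ideal_sum[OF J]) (simp_all add: summand)
  finally show "x + y \<in> rad J" unfolding rad_def using a(1) by (intro CollectI exI[of _ "a + b"]) simp
next
  fix r x assume "x \<in> rad J"
  then obtain a where a: "a \<ge> 1" "x ^ a \<in> J" unfolding rad_def by blast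
  have "(r * x) ^ a = r ^ a * x ^ a" by (simp add: power_mult_distrib)
  then have "(r * x) ^ a \<in> J" using ideal_multL[OF J a(2)] by simp
  then show "r * x \<in> rad J" unfolding rad_def using a(1) by blast
qed

lemma rad_sub: "J \<subseteq> rad J"
  unfolding rad_def by (auto intro: exI[of _ 1])

lemma rad_mono: "J \<subseteq> J' \<Longrightarrow> rad J \<subseteq> rad J'"
  unfolding rad_def by blast

lemma radical_ideal_rad: "radical_ideal J \<Longrightarrow> rad J = J"
  unfolding radical_ideal_def rad_def by (auto intro: exI[of _ 1])

lemma rad_split:
  assumes J: "is_ideal J" and xy: "(x * y) ^ n \<in> J"
  shows "rad J = rad (ideal_plus J (principal_ideal (x ^ n))) \<inter> rad (ideal_plus J (principal_ideal (y ^ n)))"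
proof
  show "rad J \<subseteq> rad (ideal_plus J (principal_ideal (x ^ n))) \<inter> rad (ideal_plus J (principal_ideal (y ^ n)))"
    using rad_mono[OF ideal_plus_left[OF is_ideal_principal]] by blast
next
  show "rad (ideal_plus J (principal_ideal (x ^ n))) \<inter> rad (ideal_plus J (principal_ideal (y ^ n))) \<subseteq> rad J"
  proof
    fix z assume "z \<in> rad (ideal_plus J (principal_ideal (x ^ n))) \<inter> rad (ideal_plus J (principal_ideal (y ^ n)))"
    then obtain a b where a: "a \<ge> 1" "z ^ a \<in> ideal_plus J (principal_ideal (x ^ n))"
      and b: "z ^ b \<in> ideal_plus J (principal_ideal (y ^ n))" unfolding rad_def by blast
    obtain j r where ja: "z ^ a = j + r * x ^ n" "j \<in> J" using a(2) by (rule plus_principalE)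
    obtain j' s where jb: "z ^ b = j' + s * y ^ n" "j' \<in> J" using b by (rule plus_principalE)
    have "z ^ (a + b) = j * (j' + s * y ^ n) + (r * x ^ n) * j' + (r * s) * (x * y) ^ n"
      using ja jb by (simp add: power_add algebra_simps power_mult_distrib)
    also have "\<dots> \<in> J"
      by (intro ideal_add[OF J] ideal_multR[OF J ja(2)] ideal_multL[OF J jb(2)] ideal_multL[OF J xy])
    finally show "z \<in> rad J" unfolding rad_def using a(1) by (intro CollectI exI[of _ "a + b"]) simp
  qed
qed

text \<open>In a Noetherian ring the radical of every ideal is a finite intersection of
  prime ideals (by well-founded induction, splitting along \<open>rad_split\<close>).\<close>

lemma rad_finite_Inter_primes:
  assumes N: "noetherian TYPE('a::comm_ring_1)" and J: "is_ideal (J::'a set)"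
  shows "\<exists>F. finite F \<and> (\<forall>P\<in>F. prime_ideal P) \<and> rad J = \<Inter>F"
  using noetherian_wf[OF N] J
proof (induction J rule: wf_induct_rule)
  case (less J)
  note J = less.prems
  show ?case
  proof (cases "1 \<in> J \<or> prime_ideal (rad J)")
    case True
    then show ?thesis
    proof
      assume "1 \<in> J"
      then have "rad J = \<Inter>{}" using rad_sub[of J] ideal_one[OF J] by auto
      then show ?thesis by blast
    qed (intro exI[of _ "{rad J}"], simp)
  next
    case False
    then have "1 \<notin> rad J" unfolding rad_def by simp
    then obtain x y where xy: "x * y \<in> rad J" and x: "x \<notin> rad J" and y: "y \<notin> rad J"
      using False rad_ideal[OF J] unfolding prime_ideal_def by blast
    obtain n where n: "n \<ge> 1" "(x * y) ^ n \<in> J" using xy unfolding rad_def by blast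
    have "x ^ n \<notin> J" "y ^ n \<notin> J" using x y n(1) unfolding rad_def by blast+
    then have "(ideal_plus J (principal_ideal (x ^ n)), J) \<in> ideal_ext_rel"
      and "(ideal_plus J (principal_ideal (y ^ n)), J) \<in> ideal_ext_rel"
      unfolding ideal_ext_rel_def using J plus_principal_strict[OF J]
        ideal_plus_ideal[OF J is_ideal_principal] by auto
    then obtain F1 F2 where F1: "finite F1" "\<forall>P\<in>F1. prime_ideal P"
        "rad (ideal_plus J (principal_ideal (x ^ n))) = \<Inter>F1"
      and F2: "finite F2" "\<forall>P\<in>F2. prime_ideal P" "rad (ideal_plus J (principal_ideal (y ^ n))) = \<Inter>F2"
      using less.IH ideal_plus_ideal[OF J is_ideal_principal] by meson
    have "rad J = \<Inter>(F1 \<union> F2)" using rad_split[OF J n(2)] F1(3) F2(3) by (simp add: Inter_Un_distrib)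
    then show ?thesis using F1 F2 by (intro exI[of _ "F1 \<union> F2"]) auto
  qed
qed

text \<open>In a Noetherian domain of Krull dimension one every nonzero prime ideal is
  maximal: otherwise \<open>0 \<subset> m \<subset> M\<close> would be a chain of primes of length two.\<close>

lemma zero_prime: "prime_ideal {0::'a::idom}"
  unfolding prime_ideal_def is_ideal_def by auto

lemma nonzero_prime_maximal:
  assumes N: "noetherian TYPE('a::idom)" and D: "krull_dim TYPE('a) = 1"
    and m: "prime_ideal (m::'a set)" and nz: "m \<noteq> {0}"
  shows "maximal_ideal m"
proof -
  have mi: "is_ideal m" and one: "1 \<notin> m" using m unfolding prime_ideal_def by blast+
  have "\<exists>u. u * c - 1 \<in> m" if c: "c \<notin> m" for c
  proof (rule ccontr)
    assume nu: "\<nexists>u. u * c - 1 \<in> m"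
    have "1 \<notin> ideal_plus m (principal_ideal c)"
    proof
      assume "1 \<in> ideal_plus m (principal_ideal c)"
      then obtain x r where "1 = x + r * c" "x \<in> m" by (rule plus_principalE)
      then have "r * c - 1 = - x" "- x \<in> m" using ideal_neg[OF mi] by (simp_all add: algebra_simps)
      with nu show False by metis
    qed
    then obtain M where M: "maximal_ideal M" "ideal_plus m (principal_ideal c) \<subseteq> M"
      using noetherian_maximal_above[OF N ideal_plus_ideal[OF mi is_ideal_principal]] by blast
    define P where "P = (\<lambda>i::nat. if i = 0 then {0::'a} else if i = 1 then m else M)"
    have "{0} \<subset> m" using ideal_0[OF mi] nz by auto
    moreover have "m \<subset> M" using plus_principal_strict[OF mi c] M(2) by blast
    ultimately have "prime_chain P 2"
      unfolding prime_chain_def P_def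
      using zero_prime m maximal_ideal_prime[OF M(1)] by (auto simp: less_Suc_eq)
    then have "enat 2 \<le> krull_dim TYPE('a)" unfolding krull_dim_def by (blast intro: Sup_upper)
    then show False using D by (simp add: one_enat_def)
  qed
  then show ?thesis using mi one unfolding maximal_ideal_def by blast
qed

lemma radical_finite_Inter_maximal:
  fixes p :: "'a::idom set"
  assumes N: "noetherian TYPE('a)" and D: "krull_dim TYPE('a) = 1"
    and p: "radical_ideal p" and nz: "p \<noteq> {0}"
  shows "\<exists>F. finite F \<and> (\<forall>m\<in>F. maximal_ideal m) \<and> p = \<Inter>F"
proof -
  have pid: "is_ideal p" using p unfolding radical_ideal_def by blast
  obtain F where F: "finite F" "\<forall>P\<in>F. prime_ideal P" "rad p = \<Inter>F"
    using rad_finite_Inter_primes[OF N pid] by blast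
  have pF: "p = \<Inter>F" using F(3) radical_ideal_rad[OF p] by simp
  obtain x where x: "x \<in> p" "x \<noteq> 0" using nz ideal_0[OF pid] by blast
  have "maximal_ideal P" if P: "P \<in> F" for P
    using x pF P F(2) by (intro nonzero_prime_maximal[OF N D]) auto
  then show ?thesis using F(1) pF by blast
qed

text \<open>Polynomials all of whose coefficients lie in a given ideal \<open>A\<close>, i.e. the
  extended ideal \<open>A[X]\<close>.\<close>

definition poly_over :: "'a::comm_ring_1 set \<Rightarrow> 'a poly set" where
  "poly_over A = {q. \<forall>i. coeff q i \<in> A}"

lemma poly_overI: "(\<And>i. coeff q i \<in> A) \<Longrightarrow> q \<in> poly_over A"
  unfolding poly_over_def by simp

lemma poly_overD: "q \<in> poly_over A \<Longrightarrow> coeff q i \<in> A"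
  unfolding poly_over_def by simp

lemma poly_over_UNIV: "poly_over UNIV = UNIV"
  unfolding poly_over_def by simp

lemma poly_over_monom: "is_ideal A \<Longrightarrow> c \<in> A \<Longrightarrow> monom c n \<in> poly_over A"
  by (rule poly_overI) (simp add: ideal_0)

lemma poly_over_ideal:
  assumes A: "is_ideal A"
  shows "is_ideal (poly_over A)"
  unfolding is_ideal_def
proof (intro conjI ballI allI impI)
  show "0 \<in> poly_over A" by (rule poly_overI) (simp add: ideal_0[OF A])
next
  fix p q assume "p \<in> poly_over A" "q \<in> poly_over A"
  then show "p + q \<in> poly_over A" by (intro poly_overI) (simp add: ideal_add[OF A] poly_overD)
next
  fix r q assume q: "q \<in> poly_over A"
  show "r * q \<in> poly_over A"
  proof (rule poly_overI)
    fix n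
    show "coeff (r * q) n \<in> A" unfolding coeff_mult
      by (rule ideal_sum[OF A]) (simp_all add: ideal_multL[OF A] poly_overD[OF q])
  qed
qed

lemma poly_over_mult_pow:
  assumes q: "q \<in> poly_over (ideal_pow A s)" and q': "q' \<in> poly_over A"
  shows "q * q' \<in> poly_over (ideal_pow A (Suc s))"
proof (rule poly_overI)
  fix n
  show "coeff (q * q') n \<in> ideal_pow A (Suc s)" unfolding coeff_mult
    by (rule ideal_sum[OF ideal_pow_ideal], simp, rule ideal_pow_gen[OF poly_overD[OF q] poly_overD[OF q']])
qed

lemma degree_less_if_top_coeff_0:
  "degree (g::'a::zero poly) \<le> n \<Longrightarrow> coeff g n = 0 \<Longrightarrow> 0 < n \<Longrightarrow> degree g < n"
  by (metis le_neq_implies_less leading_coeff_0_iff degree_0)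

lemma degree_drop_leading_term:
  fixes p :: "'a::comm_ring_1 poly"
  shows "p - monom (lead_coeff p) (degree p) = 0 \<or> degree (p - monom (lead_coeff p) (degree p)) < degree p"
proof (cases "degree p = 0")
  case True
  then show ?thesis using degree_0_id[OF True] by (simp add: monom_0)
next
  case False
  then show ?thesis
    by (intro disjI2 degree_less_if_top_coeff_0) (auto intro!: degree_diff_le degree_monom_le)
qed

lemma pow_subset_poly_over_plus:
  assumes A: "is_ideal A" and I: "I \<subseteq> ideal_plus (poly_over A) (principal_ideal f)"
  shows "ideal_pow I s \<subseteq> ideal_plus (poly_over (ideal_pow A s)) (principal_ideal f)"
proof (induction s)
  case 0
  show ?case using ideal_plus_left[OF is_ideal_principal, of "UNIV" f] by (simp add: poly_over_UNIV)
next
  case (Suc s)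
  show ?case
  proof (rule ideal_pow_Suc_least[OF ideal_plus_ideal[OF poly_over_ideal[OF ideal_pow_ideal] is_ideal_principal]])
    fix x y assume "x \<in> ideal_pow I s" and "y \<in> I"
    then have "x \<in> ideal_plus (poly_over (ideal_pow A s)) (principal_ideal f)"
      and "y \<in> ideal_plus (poly_over A) (principal_ideal f)" using Suc.IH I by blast+
    then obtain q h q' h' where x: "x = q + h * f" "q \<in> poly_over (ideal_pow A s)"
      and y: "y = q' + h' * f" "q' \<in> poly_over A" by (metis plus_principalE)
    have "x * y = q * q' + (q * h' + h * q' + h * h' * f) * f" using x y by (simp add: algebra_simps)
    then show "x * y \<in> ideal_plus (poly_over (ideal_pow A (Suc s))) (principal_ideal f)"
      using plus_principalI[OF poly_over_mult_pow[OF x(2) y(2)]] by simp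
  qed
qed

text \<open>In \<open>a = q + h f\<close> the top coefficient of \<open>h f\<close>, which is that of \<open>h\<close>, must be
  cancelled by \<open>q\<close>; so it lies in \<open>A\<close> and that term of \<open>h f\<close> can be moved into \<open>q\<close>,
  lowering the degree of \<open>h\<close>.\<close>

lemma constant_mod_monic:
  assumes A: "is_ideal A" and f1: "lead_coeff f = 1" and fd: "1 \<le> degree f"
    and a: "[:a:] \<in> ideal_plus (poly_over A) (principal_ideal f)"
  shows "a \<in> A"
proof -
  have const: "a \<in> A" if "[:a:] = q" "q \<in> poly_over A" for q
    using poly_overD[OF that(2), of 0] that(1) by auto
  have "[:a:] = q + h * f \<longrightarrow> q \<in> poly_over A \<longrightarrow> a \<in> A" for q h
  proof (induction "degree h" arbitrary: h q rule: less_induct)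
    case less
    show ?case
    proof (intro impI)
      assume e: "[:a:] = q + h * f" and q: "q \<in> poly_over A"
      let ?n = "degree h + degree f"
      have "coeff [:a:] ?n = 0" using fd by (simp add: coeff_pCons split: nat.split)
      then have "coeff q ?n + lead_coeff h = 0" using e coeff_mult_degree_sum[of h f] f1 by simp
      then have "lead_coeff h = - coeff q ?n" by (simp add: eq_neg_iff_add_eq_0 add.commute)
      then have "lead_coeff h \<in> A" using ideal_neg[OF A poly_overD[OF q]] by simp
      then have t: "monom (lead_coeff h) (degree h) * f \<in> poly_over A"
        by (intro ideal_multR[OF poly_over_ideal[OF A]] poly_over_monom[OF A])
      define h' where "h' = h - monom (lead_coeff h) (degree h)"
      define q' where "q' = q + monom (lead_coeff h) (degree h) * f"
      have e': "[:a:] = q' + h' * f" unfolding q'_def h'_def using e by (simp add: algebra_simps)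
      have q': "q' \<in> poly_over A" unfolding q'_def by (rule ideal_add[OF poly_over_ideal[OF A] q t])
      from degree_drop_leading_term[of h] show "a \<in> A"
      proof
        assume "h - monom (lead_coeff h) (degree h) = 0"
        then show ?thesis using const[OF _ q'] e' unfolding h'_def by simp
      next
        assume "degree (h - monom (lead_coeff h) (degree h)) < degree h"
        then show ?thesis using less e' q' unfolding h'_def by blast
      qed
    qed
  qed
  then show ?thesis using a by (blast elim: plus_principalE)
qed

lemma contract_ideal:
  assumes I: "is_ideal (I :: 'a::comm_ring_1 poly set)"
  shows "is_ideal (contract I)"
  unfolding is_ideal_def contract_def
proof (intro conjI ballI allI impI)
  show "0 \<in> {a. [:a:] \<in> I}" using ideal_0[OF I] by simp
next
  fix x y assume "x \<in> {a. [:a:] \<in> I}" "y \<in> {a. [:a:] \<in> I}"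
  then have "[:x:] + [:y:] \<in> I" by (intro ideal_add[OF I]) simp_all
  then show "x + y \<in> {a. [:a:] \<in> I}" by simp
next
  fix r x assume "x \<in> {a. [:a:] \<in> I}"
  then have "[:r:] * [:x:] \<in> I" by (intro ideal_multL[OF I]) simp
  then show "r * x \<in> {a. [:a:] \<in> I}" by (simp add: mult.commute)
qed

lemma poly_over_contract:
  assumes I: "is_ideal (I :: 'a::comm_ring_1 poly set)" and q: "q \<in> poly_over (contract I)"
  shows "q \<in> I"
proof -
  have "(\<Sum>i\<le>degree q. monom (coeff q i) i) \<in> I"
  proof (rule ideal_sum[OF I], simp)
    fix i
    have "[:coeff q i:] \<in> I" using poly_overD[OF q, of i] unfolding contract_def by simp
    then have "[:coeff q i:] * monom 1 i \<in> I" by (rule ideal_multR[OF I])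
    then show "monom (coeff q i) i \<in> I" by (simp add: smult_monom)
  qed
  then show ?thesis by (simp add: poly_as_sum_of_monoms)
qed

lemma contract_pow_supset:
  assumes I: "is_ideal (I :: 'a::comm_ring_1 poly set)"
  shows "ideal_pow (contract I) t \<subseteq> contract (ideal_pow I t)"
proof (induction t)
  case 0
  show ?case by (simp add: contract_def)
next
  case (Suc t)
  show ?case
  proof (rule ideal_pow_Suc_least[OF contract_ideal[OF ideal_pow_ideal]])
    fix x y assume x: "x \<in> ideal_pow (contract I) t" and y: "y \<in> contract I"
    have "[:x:] \<in> ideal_pow I t" using Suc.IH x unfolding contract_def by auto
    moreover have "[:y:] \<in> I" using y unfolding contract_def by simp
    ultimately have "[:x:] * [:y:] \<in> ideal_pow I (Suc t)" by (rule ideal_pow_gen)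
    then show "x * y \<in> contract (ideal_pow I (Suc t))" unfolding contract_def by (simp add: mult.commute)
  qed
qed

lemma radical_contract:
  assumes "radical_ideal I"
  shows "radical_ideal (contract I)"
  using assms contract_ideal unfolding radical_ideal_def contract_def by (auto simp: poly_const_pow)

text \<open>Let \<open>m\<close> be a maximal ideal of \<open>R\<close> and \<open>b \<notin> I \<inter> R\<close>
  with \<open>b m \<subseteq> I \<inter> R\<close>.  Then \<open>K = I + m[X]\<close> is proper, and a polynomial of least
  degree in \<open>K\<close> whose leading coefficient is a unit modulo \<open>m\<close> can be normalised
  to a monic \<open>f \<in> K\<close> of positive degree; division by \<open>f\<close> shows \<open>K \<subseteq> m[X] + (f)\<close>.
  First, \<open>K\<close> is proper: from \<open>1 = g + q\<close> we would get \<open>b = bg + bq \<in> I\<close>.\<close>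

lemma one_notin_plus_poly_over:
  assumes I: "is_ideal I" and b: "b \<notin> contract I" and bm: "\<And>x. x \<in> m \<Longrightarrow> b * x \<in> contract I"
  shows "1 \<notin> ideal_plus I (poly_over m)"
proof
  assume "1 \<in> ideal_plus I (poly_over m)"
  then obtain g q where gq: "1 = g + q" "g \<in> I" "q \<in> poly_over m" by (rule ideal_plusE)
  have "smult b q \<in> poly_over (contract I)" using bm poly_overD[OF gq(3)] by (intro poly_overI) simp
  then have "[:b:] * g + smult b q \<in> I"
    by (intro ideal_add[OF I] ideal_multL[OF I gq(2)] poly_over_contract[OF I])
  moreover have "[:b:] * (g + q) = [:b:] * g + smult b q" by (simp add: smult_add_right)
  then have "[:b:] = [:b:] * g + smult b q" by (simp only: gq(1)[symmetric] mult_1_right)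
  ultimately have "[:b:] \<in> I" by (metis (no_types))
  then show False using b unfolding contract_def by simp
qed

lemma monic_from_unit_leading_coeff:
  assumes K: "is_ideal K" and mK: "poly_over m \<subseteq> K" and m: "maximal_ideal m"
    and k: "k \<in> K" and lk: "lead_coeff k \<notin> m"
  shows "\<exists>f\<in>K. lead_coeff f = 1 \<and> degree f = degree k"
proof -
  obtain u where u: "u * lead_coeff k - 1 \<in> m" using m lk unfolding maximal_ideal_def by blast
  define f where "f = smult u k - monom (u * lead_coeff k - 1) (degree k)"
  have cf: "coeff f (degree k) = 1" unfolding f_def by simp
  have "degree f \<le> degree k" unfolding f_def
    by (intro degree_diff_le order.trans[OF degree_smult_le] degree_monom_le) simp
  then have df: "degree f = degree k" using le_degree[of f "degree k"] cf by simp
  have "monom (u * lead_coeff k - 1) (degree k) \<in> K"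
    using mK poly_over_monom[OF maximal_ideal_ideal[OF m] u] by blast
  then have "f \<in> K" unfolding f_def using ideal_multL[OF K k, of "[:u:]"]
    by (intro ideal_diff[OF K]) simp_all
  then show ?thesis using cf df by (intro bexI[of _ f]) simp_all
qed

text \<open>Division by \<open>f\<close> modulo \<open>m[X]\<close>: if \<open>f \<in> K\<close> has least degree among the elements
  of \<open>K\<close> with leading coefficient outside \<open>m\<close>, the leading term of any \<open>k \<in> K\<close> can be
  removed by subtracting an element of \<open>m[X] + (f)\<close>, staying inside \<open>K\<close>.\<close>

lemma reduction_step:
  assumes K: "is_ideal K" and mK: "poly_over m \<subseteq> K" and m: "is_ideal m"
    and f1: "lead_coeff f = 1" and fd: "1 \<le> degree f"
    and H: "\<And>k. k \<in> K \<Longrightarrow> lead_coeff k \<notin> m \<Longrightarrow> degree f \<le> degree k \<and> f \<in> K"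
    and k: "k \<in> K"
  shows "\<exists>k'\<in>K. k - k' \<in> ideal_plus (poly_over m) (principal_ideal f) \<and> (k' = 0 \<or> degree k' < degree k)"
proof (cases "lead_coeff k \<in> m")
  case True
  let ?t = "monom (lead_coeff k) (degree k)"
  have t: "?t \<in> poly_over m" by (rule poly_over_monom[OF m True])
  have "k - ?t \<in> K" using ideal_diff[OF K k] t mK by blast
  moreover have "k - (k - ?t) \<in> ideal_plus (poly_over m) (principal_ideal f)"
    using t ideal_plus_left[OF is_ideal_principal] by auto
  ultimately show ?thesis using degree_drop_leading_term[of k] by blast
next
  case False
  have df: "degree f \<le> degree k" and fK: "f \<in> K" using H[OF k False] by auto
  define g where "g = monom (lead_coeff k) (degree k - degree f) * f"
  have "g \<in> K" unfolding g_def by (rule ideal_multL[OF K fK])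
  then have "k - g \<in> K" by (rule ideal_diff[OF K k])
  moreover have "k - (k - g) \<in> ideal_plus (poly_over m) (principal_ideal f)"
    using plus_principalI[OF ideal_0[OF poly_over_ideal[OF m]]] unfolding g_def by simp
  moreover have "degree (k - g) < degree k"
  proof (rule degree_less_if_top_coeff_0)
    have "degree g \<le> degree k" unfolding g_def
      using df degree_mult_le[of "monom (lead_coeff k) (degree k - degree f)" f]
        degree_monom_le[of "lead_coeff k" "degree k - degree f"] by linarith
    then show "degree (k - g) \<le> degree k" by (intro degree_diff_le) simp_all
    show "coeff (k - g) (degree k) = 0" using df f1 by (simp add: g_def coeff_monom_mult)
    show "0 < degree k" using df fd by simp
  qed
  ultimately show ?thesis by blast
qed

lemma reduction:
  assumes K: "is_ideal K" and mK: "poly_over m \<subseteq> K" and m: "is_ideal m"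
    and f1: "lead_coeff f = 1" and fd: "1 \<le> degree f"
    and H: "\<And>k. k \<in> K \<Longrightarrow> lead_coeff k \<notin> m \<Longrightarrow> degree f \<le> degree k \<and> f \<in> K"
  shows "K \<subseteq> ideal_plus (poly_over m) (principal_ideal f)"
proof -
  let ?N = "ideal_plus (poly_over m) (principal_ideal f)"
  have N: "is_ideal ?N" by (rule ideal_plus_ideal[OF poly_over_ideal[OF m] is_ideal_principal])
  have "k \<in> K \<longrightarrow> k \<in> ?N" for k
  proof (induction "degree k" arbitrary: k rule: less_induct)
    case less
    show ?case
    proof
      assume k: "k \<in> K"
      obtain k' where k': "k' \<in> K" "k - k' \<in> ?N" "k' = 0 \<or> degree k' < degree k"
        using reduction_step[OF K mK m f1 fd H k] by blast
      have "k' \<in> ?N" using k'(1,3) less ideal_0[OF N] by blast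
      then show "k \<in> ?N" using ideal_add[OF N k'(2) \<open>k' \<in> ?N\<close>] by simp
    qed
  qed
  then show ?thesis by blast
qed

lemma monic_modulus:
  assumes I: "is_ideal I" and m: "maximal_ideal m"
    and b: "b \<notin> contract I" and bm: "\<And>x. x \<in> m \<Longrightarrow> b * x \<in> contract I"
  shows "\<exists>f. lead_coeff f = 1 \<and> 1 \<le> degree f \<and> I \<subseteq> ideal_plus (poly_over m) (principal_ideal f)"
proof -
  have mi: "is_ideal m" by (rule maximal_ideal_ideal[OF m])
  define K where "K = ideal_plus I (poly_over m)"
  have K: "is_ideal K" unfolding K_def by (rule ideal_plus_ideal[OF I poly_over_ideal[OF mi]])
  have IK: "I \<subseteq> K" and mK: "poly_over m \<subseteq> K"
    unfolding K_def by (simp_all add: ideal_plus_left ideal_plus_right I poly_over_ideal[OF mi])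
  have one: "1 \<notin> K" unfolding K_def by (rule one_notin_plus_poly_over[OF I b bm])
  show ?thesis
  proof (cases "\<exists>k\<in>K. lead_coeff k \<notin> m")
    case False
    have "K \<subseteq> ideal_plus (poly_over m) (principal_ideal (monom 1 1))"
      using False by (intro reduction[OF K mK mi]) (simp_all add: degree_monom_eq)
    then show ?thesis using IK by (intro exI[of _ "monom 1 1"]) (auto simp: degree_monom_eq)
  next
    case True
    define d where "d = (LEAST n. \<exists>k\<in>K. lead_coeff k \<notin> m \<and> degree k = n)"
    obtain k0 where k0: "k0 \<in> K" "lead_coeff k0 \<notin> m" "degree k0 = d"
      using LeastI_ex[of "\<lambda>n. \<exists>k\<in>K. lead_coeff k \<notin> m \<and> degree k = n"] True unfolding d_def by blast
    then obtain f where f: "f \<in> K" "lead_coeff f = 1" "degree f = d"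
      using monic_from_unit_leading_coeff[OF K mK m] by blast
    have fd: "1 \<le> degree f"
    proof (rule ccontr)
      assume "\<not> 1 \<le> degree f"
      then have d0: "degree f = 0" by simp
      then have "f = [:lead_coeff f:]" using degree_0_id[OF d0] by simp
      then have "f = 1" using f(2) by (simp add: one_pCons)
      then show False using f(1) one by simp
    qed
    have "d \<le> degree k" if "k \<in> K" "lead_coeff k \<notin> m" for k
      unfolding d_def using that by (blast intro: Least_le)
    then have "K \<subseteq> ideal_plus (poly_over m) (principal_ideal f)"
      using f by (intro reduction[OF K mK mi f(2) fd]) auto
    then show ?thesis using IK f(2) fd by blast
  qed
qed

lemma contract_pow_subset_maximal_pow:
  assumes I: "is_ideal I" and m: "maximal_ideal m"
    and b: "b \<notin> contract I" and bm: "\<And>x. x \<in> m \<Longrightarrow> b * x \<in> contract I"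
  shows "contract (ideal_pow I t) \<subseteq> ideal_pow m t"
proof
  fix a assume a: "a \<in> contract (ideal_pow I t)"
  obtain f where f: "lead_coeff f = 1" "1 \<le> degree f" "I \<subseteq> ideal_plus (poly_over m) (principal_ideal f)"
    using monic_modulus[OF I m b bm] by blast
  have "[:a:] \<in> ideal_plus (poly_over (ideal_pow m t)) (principal_ideal f)"
    using a pow_subset_poly_over_plus[OF maximal_ideal_ideal[OF m] f(3)] unfolding contract_def by blast
  then show "a \<in> ideal_pow m t" by (rule constant_mod_monic[OF ideal_pow_ideal f(1,2)])
qed

lemma contract_pow_subset_Inter_maximal:
  assumes I: "is_ideal I" and F: "finite F" "\<And>m. m \<in> F \<Longrightarrow> maximal_ideal m"
    and p: "contract I = \<Inter>F"
  shows "contract (ideal_pow I t) \<subseteq> ideal_pow (contract I) t"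
proof -
  have "contract (ideal_pow I t) \<subseteq> ideal_pow m t" if m: "m \<in> F" for m
  proof -
    obtain b where b: "b \<notin> m" "\<forall>x\<in>m. b * x \<in> \<Inter>F" using separating_element[OF F m] by blast
    have "b \<notin> contract I" using b(1) m p by blast
    then show ?thesis using b(2) p by (intro contract_pow_subset_maximal_pow[OF I F(2)[OF m]]) auto
  qed
  then have "contract (ideal_pow I t) \<subseteq> (\<Inter>m\<in>F. ideal_pow m t)" by blast
  also have "\<dots> \<subseteq> ideal_pow (\<Inter>F) t"
    using F by (intro Inter_pow_subset_pow_Inter) (auto intro: maximal_ideal_ideal maximal_ideal_comaximal)
  finally show ?thesis using p by simp
qed

theorem theorem3p11:
  fixes I :: "'a::idom poly set"
  assumes "noetherian TYPE('a)"
    and "krull_dim TYPE('a) = 1"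
    and "radical_ideal I"
  shows "power_stable I"
  unfolding power_stable_def
proof (intro allI impI equalityI)
  fix t :: nat assume t: "1 \<le> t"
  have I: "is_ideal I" using assms(3) unfolding radical_ideal_def by blast
  show "ideal_pow (contract I) t \<subseteq> contract (ideal_pow I t)" by (rule contract_pow_supset[OF I])
  show "contract (ideal_pow I t) \<subseteq> ideal_pow (contract I) t"
  proof (cases "contract I = {0}")
    case True
    have "contract (ideal_pow I t) \<subseteq> contract I"
      using ideal_pow_le[OF I t] unfolding contract_def by blast
    then show ?thesis using True ideal_0[OF ideal_pow_ideal] by auto
  next
    case False
    then obtain F where "finite F" "\<forall>m\<in>F. maximal_ideal m" "contract I = \<Inter>F"
      using radical_finite_Inter_maximal[OF assms(1,2) radical_contract[OF assms(3)]] by blast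
    then show ?thesis by (intro contract_pow_subset_Inter_maximal[OF I]) auto
  qed
qed

end
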